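(* Let $f:\mathbb{R}^{n_x}\to\mathbb{R}$ be a differentiable (Lipschitz) objective and let $\varphi:\mathcal{X}\times\mathcal{H}\times\mathcal{W}\to\mathcal{X}$ be an update rule, differentiable in its meta-parameters $w\in\mathcal{W}\subset\mathbb{R}^{n_w}$. Fix $(x^{(0)},h^{(0)},w)$ and define $x^{(k)}=x^{(k-1)}+\varphi(x^{(k-1)},h^{(k-1)},w)$ for $k=1,\dots,K$, where each learner state $h^{(k)}$ is produced by a fixed process from the history $(x^{(0)},h^{(0)},\dots,x^{(k-1)},h^{(k-1)},x^{(k)})$; view $x^{(K)}=x^{(K)}(w)$ as a (Lipschitz, differentiable) function of $w$. Let $D:=\big[\tfrac{\partial}{\partial w}x^{(K)}(w)\big]^T\in\mathbb{R}^{n_w\times n_x}$, $G^T:=D^TD$, $g:=\nabla_x f(x^{(K)})$ and $r:=\|g\|_2/\|G^Tg\|_2$. Let $\mu(a,b)=\|a-b\|_2^2$ and $\tilde x=x^{(K)}-rG^Tg$ (treated as a constant). Let $w'=w-\beta\nabla_w f(x^{(K)}(w))$ and $\tilde w=w-\beta\nabla_w\mu(\tilde x,x^{(K)}(w))$, with the same $\beta>0$. Then for $\beta$ sufficiently small, $f(x^{(K)}(\tilde w))\le f(x^{(K)}(w'))$, strictly if $GG^T\neq G^T$ and $G^T\nabla_x f(x^{(K)})\neq 0$.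
   Context: Noiseless setting: all updates are considered in expectation (true gradients). $w'$ is the standard meta-gradient update and $\tilde w$ the bootstrapped meta-gradient update (gradient taken through the second argument of $\mu$, not through the target $\tilde x$). *)

theory Defs
  imports "HOL-Analysis.Analysis"
begin

text \<open>The list holds the history
  (x0,h0), (x1,h1), ..., (xk,hk).\<close>
fun traj :: "(real^'nx \<Rightarrow> 'h \<Rightarrow> real^'nw \<Rightarrow> real^'nx)
      \<Rightarrow> (((real^'nx) \<times> 'h) list \<Rightarrow> real^'nx \<Rightarrow> 'h)
      \<Rightarrow> real^'nx \<Rightarrow> 'h \<Rightarrow> real^'nw \<Rightarrow> nat \<Rightarrow> ((real^'nx) \<times> 'h) list" where
  "traj \<phi> P x0 h0 w 0 = [(x0, h0)]"
| "traj \<phi> P x0 h0 w (Suc k) =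
     (let hist = traj \<phi> P x0 h0 w k;
          xk = fst (last hist); hk = snd (last hist);
          xn = xk + \<phi> xk hk w
      in hist @ [(xn, P hist xn)])"

definition xK :: "(real^'nx \<Rightarrow> 'h \<Rightarrow> real^'nw \<Rightarrow> real^'nx)
      \<Rightarrow> (((real^'nx) \<times> 'h) list \<Rightarrow> real^'nx \<Rightarrow> 'h)
      \<Rightarrow> real^'nx \<Rightarrow> 'h \<Rightarrow> nat \<Rightarrow> real^'nw \<Rightarrow> real^'nx" where
  "xK \<phi> P x0 h0 K w = fst (last (traj \<phi> P x0 h0 w K))"

definition grad :: "('a::real_inner \<Rightarrow> real) \<Rightarrow> 'a \<Rightarrow> 'a" where
  "grad F x = (THE v. (F has_derivative (\<lambda>u. v \<bullet> u)) (at x))"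

definition mu :: "'a::real_normed_vector \<Rightarrow> 'a \<Rightarrow> real" where
  "mu a b = (norm (a - b))\<^sup>2"

end

theory Submission
  imports Defs
begin

text \<open>To first order, f (X (w - \<beta> d)) = f (X w) - \<beta> (d1 \<bullet> d) + o(\<beta>), where d1 = D g
  is the standard meta-gradient, so it suffices to compare the directional derivatives
  of f \<circ> X along the two meta-gradients. The bootstrapped meta-gradient is
  d2 = 2 D (X w - xt) = 2 r D G^T g. Since G^T = D^T D, Cauchy-Schwarz gives
  d1 \<bullet> d1 = g \<bullet> G^T g \<le> |g| |G^T g|, whereas d1 \<bullet> d2 = 2 r |G^T g|^2 = 2 |g| |G^T g|.
  Hence the bootstrapped step descends strictly faster whenever G^T g \<noteq> 0 (the factor 2
  coming from \<mu> makes the hypothesis G G^T \<noteq> G^T unnecessary), and for G^T g = 0 both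
  meta-gradients vanish.\<close>

lemma grad_eqI:
  fixes F :: "'a::real_inner \<Rightarrow> real"
  assumes "(F has_derivative (\<lambda>u. v \<bullet> u)) (at x)"
  shows "grad F x = v"
  unfolding grad_def
proof (rule the_equality)
  fix v' assume "(F has_derivative (\<lambda>u. v' \<bullet> u)) (at x)"
  from this assms have "(\<lambda>u. v' \<bullet> u) = (\<lambda>u. v \<bullet> u)"
    by (rule has_derivative_unique)
  then have "(v' - v) \<bullet> (v' - v) = 0"
    by (metis inner_diff_left right_minus_eq)
  then show "v' = v" by simp
qed (rule assms)

lemma has_derivative_grad:
  fixes F :: "'a::euclidean_space \<Rightarrow> real"
  assumes "F differentiable (at x)"
  shows "(F has_derivative (\<lambda>u. grad F x \<bullet> u)) (at x)"
proof -
  obtain F' where F': "(F has_derivative F') (at x)"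
    using assms differentiable_def by blast
  have "F' = (\<lambda>u. adjoint F' 1 \<bullet> u)"
  proof
    fix u
    have "u \<bullet> adjoint F' 1 = F' u \<bullet> 1"
      using adjoint_works[OF has_derivative_linear[OF F']] by blast
    then show "F' u = adjoint F' 1 \<bullet> u" by (simp add: inner_commute)
  qed
  with F' have "(F has_derivative (\<lambda>u. adjoint F' 1 \<bullet> u)) (at x)" by simp
  with grad_eqI[OF this] show ?thesis by simp
qed

lemma grad_compose:
  fixes X :: "real^'n \<Rightarrow> real^'m" and F :: "real^'m \<Rightarrow> real"
  assumes X: "(X has_derivative X') (at w)" and F: "F differentiable (at (X w))"
  shows "grad (\<lambda>v. F (X v)) w = transpose (matrix X') *v grad F (X w)"
proof (rule grad_eqI)
  have "X' u = matrix X' *v u" for u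
    by (simp add: matrix_works has_derivative_linear[OF X])
  then have "(\<lambda>u. grad F (X w) \<bullet> X' u) = (\<lambda>u. (transpose (matrix X') *v grad F (X w)) \<bullet> u)"
    by (simp add: dot_lmul_matrix)
  with has_derivative_compose[OF X has_derivative_grad[OF F]]
  show "((\<lambda>v. F (X v)) has_derivative (\<lambda>u. (transpose (matrix X') *v grad F (X w)) \<bullet> u)) (at w)"
    by simp
qed

lemma has_derivative_mu:
  fixes a :: "'a::real_inner"
  shows "(mu a has_derivative (\<lambda>u. (2 *\<^sub>R (y - a)) \<bullet> u)) (at y)"
proof -
  have "mu a = (\<lambda>y. (a - y) \<bullet> (a - y))"
    by (simp add: mu_def power2_norm_eq_inner fun_eq_iff)
  moreover have "((\<lambda>y. (a - y) \<bullet> (a - y)) has_derivative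
      (\<lambda>u. (a - y) \<bullet> (- u) + (- u) \<bullet> (a - y))) (at y)"
    by (auto intro!: derivative_eq_intros)
  ultimately show ?thesis
    by (simp add: inner_commute algebra_simps)
qed

lemma grad_mu_compose:
  fixes X :: "real^'n \<Rightarrow> real^'m"
  assumes X: "(X has_derivative X') (at w)"
  shows "grad (\<lambda>v. mu a (X v)) w = 2 *\<^sub>R (transpose (matrix X') *v (X w - a))"
proof -
  have "mu a differentiable (at (X w))"
    using has_derivative_mu differentiableI by blast
  then have "grad (\<lambda>v. mu a (X v)) w = transpose (matrix X') *v grad (mu a) (X w)"
    by (rule grad_compose[OF X])
  also have "grad (mu a) (X w) = 2 *\<^sub>R (X w - a)"
    by (rule grad_eqI[OF has_derivative_mu])
  finally show ?thesis
    by (simp add: matrix_vector_mult_scaleR del: transpose_matrix_vector)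
qed

lemma inner_matrix_vector_mult:
  fixes A :: "real^'n^'m"
  shows "(A *v x) \<bullet> (A *v y) = ((transpose A ** A) *v x) \<bullet> y"
  by (metis dot_lmul_matrix inner_commute matrix_vector_mul_assoc vector_transpose_matrix)

lemma descent_comparison_small_step:
  fixes F :: "'a::real_inner \<Rightarrow> real"
  assumes F: "(F has_derivative (\<lambda>u. G \<bullet> u)) (at w)" and ab: "G \<bullet> a < G \<bullet> b"
  shows "\<exists>\<beta>0>0. \<forall>\<beta>. 0 < \<beta> \<and> \<beta> < \<beta>0 \<longrightarrow> F (w - \<beta> *\<^sub>R b) < F (w - \<beta> *\<^sub>R a)"
proof -
  have along: "((\<lambda>t. F (w - t *\<^sub>R d)) has_derivative (\<lambda>t. t * - (G \<bullet> d))) (at 0)" for d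
  proof -
    have line: "((\<lambda>t::real. w - t *\<^sub>R d) has_derivative (\<lambda>t. - (t *\<^sub>R d))) (at 0)"
      by (auto intro!: derivative_eq_intros)
    have "(F has_derivative (\<lambda>u. G \<bullet> u)) (at (w - 0 *\<^sub>R d))"
      using F by simp
    from has_derivative_compose[OF line this] show ?thesis by simp
  qed
  define p where "p t = F (w - t *\<^sub>R b) - F (w - t *\<^sub>R a)" for t :: real
  have "(p has_derivative (\<lambda>t. (G \<bullet> a - G \<bullet> b) * t)) (at 0)"
    using has_derivative_diff[OF along[of b] along[of a]]
    unfolding p_def[abs_def] by (simp add: algebra_simps)
  then have "DERIV p 0 :> G \<bullet> a - G \<bullet> b"
    by (simp add: has_field_derivative_def)
  from DERIV_neg_dec_right[OF this] ab
  obtain \<beta>0 where "\<beta>0 > 0" "\<forall>\<beta>>0. \<beta> < \<beta>0 \<longrightarrow> p 0 > p \<beta>" by auto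
  then show ?thesis by (auto simp: p_def)
qed

lemma bootstrapped_direction_dominates:
  fixes D :: "real^'n^'m" and Gt :: "real^'n^'n" and g :: "real^'n"
  defines "Gt \<equiv> transpose D ** D"
  assumes Gtg: "Gt *v g \<noteq> 0"
  shows "(D *v g) \<bullet> (D *v g) < (D *v g) \<bullet> ((2 * (norm g / norm (Gt *v g))) *\<^sub>R (D *v (Gt *v g)))"
    (is "?lhs < ?rhs")
proof -
  have "g \<noteq> 0" using Gtg by auto
  then have pos: "0 < norm g * norm (Gt *v g)" using Gtg by simp
  have "?lhs = g \<bullet> (Gt *v g)" by (simp add: Gt_def inner_matrix_vector_mult inner_commute)
  also have "\<dots> \<le> norm g * norm (Gt *v g)" by (rule norm_cauchy_schwarz)
  also have "\<dots> < 2 * (norm g / norm (Gt *v g)) * ((Gt *v g) \<bullet> (Gt *v g))"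
    using pos Gtg by (simp add: power2_norm_eq_inner[symmetric] power2_eq_square)
  also have "\<dots> = ?rhs"
    by (simp add: Gt_def inner_matrix_vector_mult)
  finally show ?thesis .
qed

lemma bootstrapped_descent_small_step:
  fixes D :: "real^'n^'m" and Gt :: "real^'n^'n" and F :: "real^'m \<Rightarrow> real"
  defines "Gt \<equiv> transpose D ** D"
  assumes F: "(F has_derivative (\<lambda>u. (D *v g) \<bullet> u)) (at w)"
  shows "\<exists>\<beta>0>0. \<forall>\<beta>. 0 < \<beta> \<and> \<beta> < \<beta>0 \<longrightarrow>
    F (w - \<beta> *\<^sub>R ((2 * (norm g / norm (Gt *v g))) *\<^sub>R (D *v (Gt *v g)))) \<le> F (w - \<beta> *\<^sub>R (D *v g)) \<and>
    (Gt *v g \<noteq> 0 \<longrightarrow>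
      F (w - \<beta> *\<^sub>R ((2 * (norm g / norm (Gt *v g))) *\<^sub>R (D *v (Gt *v g)))) < F (w - \<beta> *\<^sub>R (D *v g)))"
proof (cases "Gt *v g = 0")
  case True
  then have "D *v g = 0"
    using inner_matrix_vector_mult[of D g g] by (simp add: Gt_def)
  with True show ?thesis by (intro exI[of _ 1]) simp
next
  case False
  then obtain \<beta>0 where "\<beta>0 > 0" "\<forall>\<beta>. 0 < \<beta> \<and> \<beta> < \<beta>0 \<longrightarrow>
      F (w - \<beta> *\<^sub>R ((2 * (norm g / norm (Gt *v g))) *\<^sub>R (D *v (Gt *v g)))) < F (w - \<beta> *\<^sub>R (D *v g))"
    using descent_comparison_small_step[OF F bootstrapped_direction_dominates] Gt_def by blast
  then show ?thesis by (auto intro!: exI[of _ \<beta>0])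
qed

theorem corollary1:
  fixes f :: "real^'nx \<Rightarrow> real"
    and \<phi> :: "real^'nx \<Rightarrow> 'h \<Rightarrow> real^'nw \<Rightarrow> real^'nx"
    and P :: "((real^'nx) \<times> 'h) list \<Rightarrow> real^'nx \<Rightarrow> 'h"
    and x0 :: "real^'nx" and h0 :: 'h and K :: nat
    and W :: "(real^'nw) set" and w :: "real^'nw"
    and X' :: "real^'nw \<Rightarrow> real^'nx"
  assumes f_diff: "\<forall>x. f differentiable (at x)"
    and f_lip: "\<exists>L. L-lipschitz_on UNIV f"
    and W_open: "open W" and w_in: "w \<in> W"
    and phi_diff: "\<forall>x h. (\<lambda>v. \<phi> x h v) differentiable_on W"
    and X_lip: "\<exists>L. L-lipschitz_on W (xK \<phi> P x0 h0 K)"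
    and X_diff: "\<forall>v\<in>W. (xK \<phi> P x0 h0 K) differentiable (at v)"
    and X_deriv: "(xK \<phi> P x0 h0 K has_derivative X') (at w)"
  shows
    "let X = xK \<phi> P x0 h0 K;
         D = transpose (matrix X');
         GT = transpose D ** D;
         G = transpose GT;
         g = grad f (X w);
         r = norm g / norm (GT *v g);
         xt = X w - r *\<^sub>R (GT *v g)
     in \<exists>\<beta>0>0. \<forall>\<beta>. 0 < \<beta> \<and> \<beta> < \<beta>0 \<longrightarrow>
          (let w' = w - \<beta> *\<^sub>R grad (\<lambda>v. f (X v)) w;
               wt = w - \<beta> *\<^sub>R grad (\<lambda>v. mu xt (X v)) w
           in f (X wt) \<le> f (X w') \<and>
              ((G ** GT \<noteq> GT \<and> GT *v g \<noteq> 0) \<longrightarrow> f (X wt) < f (X w')))"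
proof -
  define X where "X = xK \<phi> P x0 h0 K"
  define D where "D = transpose (matrix X')"
  define GT where "GT = transpose D ** D"
  define g where "g = grad f (X w)"
  define r where "r = norm g / norm (GT *v g)"
  define xt where "xt = X w - r *\<^sub>R (GT *v g)"
  have X: "(X has_derivative X') (at w)" using X_deriv by (simp add: X_def)
  have grad_fX: "grad (\<lambda>v. f (X v)) w = D *v g"
    using grad_compose[OF X] f_diff by (simp add: D_def g_def)
  have "(\<lambda>v. f (X v)) differentiable (at w)"
    using differentiable_chain_at[of X w f] X f_diff
    unfolding o_def differentiable_def by blast
  from has_derivative_grad[OF this]
  have fX: "((\<lambda>v. f (X v)) has_derivative (\<lambda>u. (D *v g) \<bullet> u)) (at w)"
    by (simp only: grad_fX)
  have grad_muX: "grad (\<lambda>v. mu xt (X v)) w = (2 * r) *\<^sub>R (D *v (GT *v g))"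
    using grad_mu_compose[OF X, of xt]
    by (simp add: xt_def D_def matrix_vector_mult_scaleR del: transpose_matrix_vector)
  from bootstrapped_descent_small_step[OF fX] show ?thesis
    unfolding Let_def X_def[symmetric] D_def[symmetric] GT_def[symmetric] g_def[symmetric]
      r_def[symmetric] xt_def[symmetric] grad_fX grad_muX
    by (meson less_imp_le)
qed

end
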